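(* The CDG discretization operator $\mathcal{H}$ is approximately skew-symmetric: for all $\boldsymbol{h}=(h_1,h_2)$, $\boldsymbol{g}=(g_1,g_2)\in V_h\times W_h$, \begin{equation*} \mathcal{H}(\boldsymbol{h},\boldsymbol{g})+\mathcal{H}(\boldsymbol{g},\boldsymbol{h}) = -\frac{2}{\tau_{\rm max}}\int_{\Omega}(h_1-h_2)(g_1-g_2)\,\mathrm{d}\boldsymbol{x}. \end{equation*}
   Context: Setting: linear flux, periodic boundary conditions. In 1D, $f(u)=\beta_1 u$ with constant $\beta_1$, on $\Omega=[x_{\min},x_{\max}]$ with a quasi-uniform primal mesh $\mathcal{T}_h^C=\{[x_{i-\frac12},x_{i+\frac12}]\}$, cell centers $x_i=\frac12(x_{i-\frac12}+x_{i+\frac12})$, and dual mesh $\mathcal{T}_h^D=\{[x_i,x_{i+1}]\}$. In 2D, $\boldsymbol{f}(u)=(\beta_1 u,\beta_2 u)$ with constants $\beta_1,\beta_2$, on a rectangle with uniform Cartesian primal mesh cells $[x_{i-\frac12},x_{i+\frac12}]\times[y_{j-\frac12},y_{j+\frac12}]$ and dual mesh cells $[x_i,x_{i+1}]\times[y_j,y_{j+1}]$. $V_h$ (resp. $W_h$) is the space of $L^2$ functions that are polynomials of degree at most $k$ on each primal (resp. dual) cell. $\tau_{\max}>0$ is a fixed constant (the maximum stable time step). The 1D CDG operator is \begin{equation*} \begin{aligned} \mathcal{H}(\boldsymbol{u},\boldsymbol{\phi}) = &-\frac{1}{\tau_{\max }} \int_{\Omega}(u_1-u_2)(\phi_1-\phi_2)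 \,\mathrm{d}x +\int_{\Omega} f(u_2)\partial_x\phi_1+ f(u_1)\partial_x\phi_2\,\mathrm{d}x\\ &-\sum_{i} \Big(f(u_2)_{i+\frac{1}{2}}(\phi_1)_{i+\frac{1}{2}}^--f(u_2)_{i-\frac{1}{2}}(\phi_1)_{i-\frac{1}{2}}^+ +f(u_1)_{i+1}(\phi_2)_{i+1}^--f(u_1)_{i}(\phi_2)_{i}^+ \Big), \end{aligned} \end{equation*} where $(\phi_1)_{i+\frac12}^{\pm}=\lim_{\epsilon\to0^+}\phi_1(x_{i+\frac12}\pm\epsilon)$ and similarly $(\phi_2)_i^{\pm}$ (note $u_2$ is continuous at $x_{i\pm\frac12}$ and $u_1$ is continuous at $x_i$). The 2D CDG operator is \begin{equation*} \begin{aligned} \mathcal{H}(\boldsymbol{u},\boldsymbol{\phi}) = &-\frac{1}{\tau_{\max }} \int_{\Omega}(u_1-u_2)(\phi_1-\phi_2) \,\mathrm{d} \boldsymbol{x} +\int_{\Omega} \boldsymbol{f}(u_2) \cdot \nabla \phi_1+ \boldsymbol{f}(u_1)\cdot \nabla \phi_2\,\mathrm{d}\boldsymbol{x}\\ &-\sum_{i,j} \bigg(\int_{x_{i-\frac{1}{2}}}^{x_{i+\frac{1}{2}}} f_2(u_2(x,y_{j+\frac{1}{2}}))(\phi_1)_{j+\frac{1}{2}}^{-} -f_2(u_2(x,y_{j-\frac{1}{2}}))(\phi_1)_{j-\frac{1}{2}}^{+} \,\mathrm{d}x +\int_{y_{j-\frac{1}{2}}}^{y_{j+\frac{1}{2}}}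 f_1(u_2(x_{i+\frac{1}{2}},y))(\phi_1)_{i+\frac{1}{2}}^{-} -f_1(u_2(x_{i-\frac{1}{2}},y))(\phi_1)_{i-\frac{1}{2}}^{+} \,\mathrm{d}y\\ &\qquad+\int_{x_i}^{x_{i+1}} f_2(u_1(x,y_{j+1}))(\phi_2)_{j+1}^{-} -f_2(u_1(x,y_{j}))(\phi_2)_{j}^{+} \,\mathrm{d}x +\int_{y_j}^{y_{j+1}} f_1(u_1(x_{i+1},y))(\phi_2)_{i+1}^{-} -f_1(u_1(x_{i},y))(\phi_2)_{i}^{+} \,\mathrm{d}y\bigg), \end{aligned} \end{equation*} with $\boldsymbol{f}=(f_1,f_2)$ and one-sided traces in $x$ (subscripts $i\pm\frac12$, $i$) or $y$ (subscripts $j\pm\frac12$, $j$) defined analogously. *)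

theory Defs
  imports "HOL-Analysis.Analysis" "HOL-Computational_Algebra.Polynomial"
begin

text \<open>A 1D primal mesh is given by its N+1 nodes xb 0 < xb 1 < ... < xb N,
  xb i standing for x_{i-1/2}; Omega = [xb 0, xb N], L = xb N - xb 0.\<close>

definition cc :: "(nat \<Rightarrow> real) \<Rightarrow> nat \<Rightarrow> real" where
  "cc xb i = (xb i + xb (Suc i)) / 2"

text \<open>Dual nodes x_0,...,x_N with the periodic convention x_N = x_0 + L.\<close>
definition dn :: "(nat \<Rightarrow> real) \<Rightarrow> nat \<Rightarrow> nat \<Rightarrow> real" where
  "dn xb N i = (if i < N then cc xb i else cc xb 0 + (xb N - xb 0))"

definition pidx :: "(nat \<Rightarrow> real) \<Rightarrow> nat \<Rightarrow> real \<Rightarrow> nat" where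
  "pidx xb N x = card {i. 1 \<le> i \<and> i < N \<and> xb i \<le> x}"

text \<open>Index of the (periodic) dual cell containing x; the last dual cell
  [x_{N-1}, x_0 + L] wraps around, covering [x_{N-1}, xmax] and [xmin, x_0).\<close>
definition didx :: "(nat \<Rightarrow> real) \<Rightarrow> nat \<Rightarrow> real \<Rightarrow> nat" where
  "didx xb N x = (if x < cc xb 0 then N - 1 else card {i. 1 \<le> i \<and> i < N \<and> cc xb i \<le> x})"

text \<open>Local coordinate of x inside its dual cell (shift by L on the wrapped part).\<close>
definition dsh :: "(nat \<Rightarrow> real) \<Rightarrow> nat \<Rightarrow> real \<Rightarrow> real" where
  "dsh xb N x = (if x < cc xb 0 then x + (xb N - xb 0) else x)"

definition per :: "(nat \<Rightarrow> real) \<Rightarrow> nat \<Rightarrow> real \<Rightarrow> real" where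
  "per xb N x = (if xb N < x then x - (xb N - xb 0) else x)"

text \<open>An element of V_h is given by one polynomial per primal cell, an element of
  W_h by one polynomial per dual cell (in the local coordinate of that cell).\<close>
definition Vh1 :: "(nat \<Rightarrow> real) \<Rightarrow> nat \<Rightarrow> (nat \<Rightarrow> real poly) \<Rightarrow> real \<Rightarrow> real" where
  "Vh1 xb N p x = poly (p (pidx xb N x)) x"

definition Wh1 :: "(nat \<Rightarrow> real) \<Rightarrow> nat \<Rightarrow> (nat \<Rightarrow> real poly) \<Rightarrow> real \<Rightarrow> real" where
  "Wh1 xb N q x = poly (q (didx xb N x)) (dsh xb N x)"

definition H1 :: "real \<Rightarrow> real \<Rightarrow> (nat \<Rightarrow> real) \<Rightarrow> nat \<Rightarrow>
    (nat \<Rightarrow> real poly) \<times> (nat \<Rightarrow> real poly) \<Rightarrow> (nat \<Rightarrow> real poly) \<times> (nat \<Rightarrow> real poly) \<Rightarrow> real" where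
  "H1 \<beta> \<tau> xb N u \<phi> = (case u of (p, q) \<Rightarrow> case \<phi> of (r, s) \<Rightarrow>
     - (1 / \<tau>) * integral {xb 0..xb N}
         (\<lambda>x. (Vh1 xb N p x - Wh1 xb N q x) * (Vh1 xb N r x - Wh1 xb N s x))
     + integral {xb 0..xb N}
         (\<lambda>x. \<beta> * Wh1 xb N q x * Vh1 xb N (\<lambda>i. pderiv (r i)) x
             + \<beta> * Vh1 xb N p x * Wh1 xb N (\<lambda>i. pderiv (s i)) x)
     - (\<Sum>i<N. \<beta> * Wh1 xb N q (xb (Suc i)) * poly (r i) (xb (Suc i))
              - \<beta> * Wh1 xb N q (xb i) * poly (r i) (xb i)
              + \<beta> * Vh1 xb N p (per xb N (dn xb N (Suc i))) * poly (s i) (dn xb N (Suc i))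
              - \<beta> * Vh1 xb N p (per xb N (dn xb N i)) * poly (s i) (dn xb N i)))"

definition poly2 :: "nat \<Rightarrow> (nat \<Rightarrow> nat \<Rightarrow> real) \<Rightarrow> real \<Rightarrow> real \<Rightarrow> real" where
  "poly2 k c x y = (\<Sum>a\<le>k. \<Sum>b\<le>k - a. c a b * x ^ a * y ^ b)"

definition poly2_dx :: "nat \<Rightarrow> (nat \<Rightarrow> nat \<Rightarrow> real) \<Rightarrow> real \<Rightarrow> real \<Rightarrow> real" where
  "poly2_dx k c x y = (\<Sum>a\<le>k. \<Sum>b\<le>k - a. c a b * (real a * x ^ (a - 1)) * y ^ b)"

definition poly2_dy :: "nat \<Rightarrow> (nat \<Rightarrow> nat \<Rightarrow> real) \<Rightarrow> real \<Rightarrow> real \<Rightarrow> real" where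
  "poly2_dy k c x y = (\<Sum>a\<le>k. \<Sum>b\<le>k - a. c a b * x ^ a * (real b * y ^ (b - 1)))"

definition umesh :: "real \<Rightarrow> real \<Rightarrow> nat \<Rightarrow> nat \<Rightarrow> real" where
  "umesh a b N i = a + real i * (b - a) / real N"

type_synonym coeffs = "nat \<Rightarrow> nat \<Rightarrow> real"
type_synonym evaluator = "coeffs \<Rightarrow> real \<Rightarrow> real \<Rightarrow> real"

definition V2 :: "evaluator \<Rightarrow> (nat \<Rightarrow> real) \<Rightarrow> nat \<Rightarrow> (nat \<Rightarrow> real) \<Rightarrow> nat \<Rightarrow>
    (nat \<Rightarrow> nat \<Rightarrow> coeffs) \<Rightarrow> real \<Rightarrow> real \<Rightarrow> real" where
  "V2 ev xb Nx yb Ny c x y = ev (c (pidx xb Nx x) (pidx yb Ny y)) x y"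

definition W2 :: "evaluator \<Rightarrow> (nat \<Rightarrow> real) \<Rightarrow> nat \<Rightarrow> (nat \<Rightarrow> real) \<Rightarrow> nat \<Rightarrow>
    (nat \<Rightarrow> nat \<Rightarrow> coeffs) \<Rightarrow> real \<Rightarrow> real \<Rightarrow> real" where
  "W2 ev xb Nx yb Ny d x y = ev (d (didx xb Nx x) (didx yb Ny y)) (dsh xb Nx x) (dsh yb Ny y)"

definition H2 :: "nat \<Rightarrow> real \<Rightarrow> real \<Rightarrow> real \<Rightarrow> (nat \<Rightarrow> real) \<Rightarrow> nat \<Rightarrow> (nat \<Rightarrow> real) \<Rightarrow> nat \<Rightarrow>
    (nat \<Rightarrow> nat \<Rightarrow> coeffs) \<times> (nat \<Rightarrow> nat \<Rightarrow> coeffs) \<Rightarrow>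
    (nat \<Rightarrow> nat \<Rightarrow> coeffs) \<times> (nat \<Rightarrow> nat \<Rightarrow> coeffs) \<Rightarrow> real" where
  "H2 k \<beta>1 \<beta>2 \<tau> xb Nx yb Ny u \<phi> = (case u of (u1, u2) \<Rightarrow> case \<phi> of (\<phi>1, \<phi>2) \<Rightarrow>
    let P = poly2 k; Px = poly2_dx k; Py = poly2_dy k;
        V = (\<lambda>ev c. V2 ev xb Nx yb Ny c); W = (\<lambda>ev d. W2 ev xb Nx yb Ny d);
        px = per xb Nx; py = per yb Ny; dx = dn xb Nx; dy = dn yb Ny
    in
     - (1 / \<tau>) * integral ({xb 0..xb Nx} \<times> {yb 0..yb Ny})
         (\<lambda>(x, y). (V P u1 x y - W P u2 x y) * (V P \<phi>1 x y - W P \<phi>2 x y))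
     + integral ({xb 0..xb Nx} \<times> {yb 0..yb Ny})
         (\<lambda>(x, y). \<beta>1 * W P u2 x y * V Px \<phi>1 x y + \<beta>2 * W P u2 x y * V Py \<phi>1 x y
                 + \<beta>1 * V P u1 x y * W Px \<phi>2 x y + \<beta>2 * V P u1 x y * W Py \<phi>2 x y)
     - (\<Sum>i<Nx. \<Sum>j<Ny.
          integral {xb i..xb (Suc i)}
            (\<lambda>x. \<beta>2 * W P u2 x (yb (Suc j)) * P (\<phi>1 i j) x (yb (Suc j))
                - \<beta>2 * W P u2 x (yb j) * P (\<phi>1 i j) x (yb j))
        + integral {yb j..yb (Suc j)}
            (\<lambda>y. \<beta>1 * W P u2 (xb (Suc i)) y * P (\<phi>1 i j) (xb (Suc i)) y
                - \<beta>1 * W P u2 (xb i) y * P (\<phi>1 i j) (xb i) y)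
        + integral {dx i..dx (Suc i)}
            (\<lambda>x. \<beta>2 * V P u1 (px x) (py (dy (Suc j))) * P (\<phi>2 i j) x (dy (Suc j))
                - \<beta>2 * V P u1 (px x) (py (dy j)) * P (\<phi>2 i j) x (dy j))
        + integral {dy j..dy (Suc j)}
            (\<lambda>y. \<beta>1 * V P u1 (px (dx (Suc i))) (py y) * P (\<phi>2 i j) (dx (Suc i)) y
                - \<beta>1 * V P u1 (px (dx i)) (py y) * P (\<phi>2 i j) (dx i) y)))"

end

theory Submission
  imports Defs
begin

(* Write the convective part of H(u, phi) as an integral of w v' plus v w' minus boundary terms,
   where v is piecewise polynomial on the primal mesh and w on the dual one. On each cell of the
   refined mesh x_0 < c_0 < x_1 < c_1 < ... < x_N both are smooth, so integrating (v w)' cell by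
   cell and telescoping yields exactly the boundary terms of H: values of w at primal nodes and of
   v at dual nodes, the last dual cell wrapping around periodically. Adding H(h, g) and H(g, h)
   pairs every volume term with its integration-by-parts partner, and only the penalty terms
   survive. In 2D the same identity holds on every line y = const (Fubini on the refined grid);
   integrating over x and splitting into primal and dual cells regroups the line terms into the
   edge integrals of H, and the x-direction follows by exchanging the coordinates. *)

section \<open>Primal, dual and refined meshes\<close>

definition mesh :: "(nat \<Rightarrow> real) \<Rightarrow> nat \<Rightarrow> bool" where
  "mesh xb N \<longleftrightarrow> 1 \<le> N \<and> (\<forall>i<N. xb i < xb (Suc i))"

lemma mesh_node_less:
  assumes "mesh xb N" "i < j" "j \<le> N"
  shows "xb i < xb j"
  using assms(2,3)
proof (induction j)
  case (Suc j)
  then have "xb j < xb (Suc j)" using assms(1) by (simp add: mesh_def)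
  with Suc show ?case by (cases "i = j") auto
qed simp

lemma mesh_node_le: "mesh xb N \<Longrightarrow> i \<le> j \<Longrightarrow> j \<le> N \<Longrightarrow> xb i \<le> xb j"
  using mesh_node_less[of xb N i j] by (cases "i = j") auto

lemma mesh_centre_bounds:
  assumes "mesh xb N" "i < N"
  shows "xb i < cc xb i" "cc xb i < xb (Suc i)"
  using assms by (auto simp: cc_def mesh_def)

lemma mesh_centre_less:
  assumes "mesh xb N" "i < j" "j < N"
  shows "cc xb i < cc xb j"
proof -
  have "cc xb i < xb (Suc i)" using mesh_centre_bounds assms by simp
  also have "xb (Suc i) \<le> xb j" using mesh_node_le assms by simp
  also have "xb j < cc xb j" using mesh_centre_bounds assms by simp
  finally show ?thesis .
qed

lemma card_nodes_below:
  fixes f :: "nat \<Rightarrow> real"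
  assumes mono: "\<And>l l'. l < l' \<Longrightarrow> l' < N \<Longrightarrow> f l < f l'"
    and "i < N" "f i \<le> x" "Suc i < N \<Longrightarrow> x < f (Suc i)"
  shows "card {l. 1 \<le> l \<and> l < N \<and> f l \<le> x} = i"
proof -
  have "f l \<le> x \<longleftrightarrow> l \<le> i" if "l < N" for l
  proof
    assume "f l \<le> x"
    show "l \<le> i"
    proof (rule ccontr)
      assume "\<not> l \<le> i"
      then have "f (Suc i) \<le> f l" using mono \<open>l < N\<close> by (cases "Suc i = l") (auto intro: less_imp_le)
      then show False using assms(4) \<open>f l \<le> x\<close> \<open>\<not> l \<le> i\<close> \<open>l < N\<close> by auto
    qed
  next
    assume "l \<le> i"
    then have "f l \<le> f i" using mono assms(2) by (cases "l = i") (auto intro: less_imp_le)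
    then show "f l \<le> x" using assms(3) by simp
  qed
  then have "{l. 1 \<le> l \<and> l < N \<and> f l \<le> x} = {1..i}" using assms(2) by auto
  then show ?thesis by simp
qed

lemma pidx_eq:
  assumes "mesh xb N" "i < N" "xb i \<le> x" "Suc i < N \<Longrightarrow> x < xb (Suc i)"
  shows "pidx xb N x = i"
  unfolding pidx_def
  by (rule card_nodes_below[OF _ assms(2-4)]) (use mesh_node_less[OF assms(1)] in auto)

lemma pidx_primal_cell:
  "mesh xb N \<Longrightarrow> i < N \<Longrightarrow> xb i < x \<Longrightarrow> x < xb (Suc i) \<Longrightarrow> pidx xb N x = i"
  by (rule pidx_eq) auto

lemma didx_eq:
  assumes "mesh xb N" "i < N" "cc xb i \<le> x" "Suc i < N \<Longrightarrow> x < cc xb (Suc i)"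
  shows "didx xb N x = i" "dsh xb N x = x"
proof -
  have "cc xb 0 \<le> cc xb i" using mesh_centre_less[OF assms(1), of 0 i] assms(2) by (cases i) auto
  then have "\<not> x < cc xb 0" using assms(3) by simp
  then show "didx xb N x = i" "dsh xb N x = x"
    unfolding didx_def dsh_def
    using card_nodes_below[OF _ assms(2-4)] mesh_centre_less[OF assms(1)] by auto
qed

lemma didx_below_centre:
  "x < cc xb 0 \<Longrightarrow> didx xb N x = N - 1 \<and> dsh xb N x = x + (xb N - xb 0)"
  by (simp add: didx_def dsh_def)

lemma dual_cell_interior:
  assumes ms: "mesh xb N" and "i < N" "cc xb i < x" "x < dn xb N (Suc i)" "x \<le> xb N"
  shows "didx xb N x = i" "dsh xb N x = x" "per xb N x = x"
proof -
  have "Suc i < N \<Longrightarrow> x < cc xb (Suc i)" using assms(4) by (simp add: dn_def)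
  then show "didx xb N x = i" "dsh xb N x = x" using didx_eq[OF ms assms(2)] assms(3) by auto
  show "per xb N x = x" using assms(5) by (simp add: per_def)
qed

lemma dual_cell_wrapped:
  assumes "xb N < x" "x < cc xb 0 + (xb N - xb 0)"
  shows "per xb N x = x - (xb N - xb 0)" "didx xb N (x - (xb N - xb 0)) = N - 1"
    "dsh xb N (x - (xb N - xb 0)) = x"
  using assms didx_below_centre[of "x - (xb N - xb 0)" xb N] by (auto simp: per_def)

text \<open>The refined mesh \<open>x\<^sub>0 < c\<^sub>0 < x\<^sub>1 < c\<^sub>1 < \<dots> < x\<^sub>N\<close> merges primal nodes and
  cell centres. On its cell \<open>m\<close> the primal cell index is \<open>m div 2\<close>, the dual one is
  \<open>rdual N m\<close>, and the local dual coordinate is \<open>x + rshift xb N m\<close>.\<close>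

definition rnode :: "(nat \<Rightarrow> real) \<Rightarrow> nat \<Rightarrow> real" where
  "rnode xb m = (if even m then xb (m div 2) else cc xb (m div 2))"

definition rdual :: "nat \<Rightarrow> nat \<Rightarrow> nat" where
  "rdual N m = (if odd m then m div 2 else if m = 0 then N - 1 else m div 2 - 1)"

definition rshift :: "(nat \<Rightarrow> real) \<Rightarrow> nat \<Rightarrow> nat \<Rightarrow> real" where
  "rshift xb N m = (if m = 0 then xb N - xb 0 else 0)"

lemma rnode_even [simp]: "rnode xb (2 * i) = xb i"
  and rnode_odd [simp]: "rnode xb (Suc (2 * i)) = cc xb i"
  and rnode_even_Suc [simp]: "rnode xb (Suc (Suc (2 * i))) = xb (Suc i)"
  and rnode_0 [simp]: "rnode xb 0 = xb 0"
  by (simp_all add: rnode_def)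

lemma rdual_simps [simp]:
  "rdual N 0 = N - 1" "rdual N (Suc (2 * i)) = i" "rdual N (Suc (Suc (2 * i))) = i"
  by (simp_all add: rdual_def)

lemma rshift_simps [simp]:
  "rshift xb N 0 = xb N - xb 0" "rshift xb N (Suc m) = 0"
  by (simp_all add: rshift_def)

lemma rnode_less:
  assumes "mesh xb N" "m < 2 * N"
  shows "rnode xb m < rnode xb (Suc m)"
proof (cases "even m")
  case True
  then obtain i where "m = 2 * i" by auto
  then show ?thesis using mesh_centre_bounds[OF assms(1), of i] assms(2) by simp
next
  case False
  then obtain i where "m = Suc (2 * i)" by (metis oddE Suc_eq_plus1)
  then show ?thesis using mesh_centre_bounds[OF assms(1), of i] assms(2) by simp
qed

lemma rnode_mono: "mesh xb N \<Longrightarrow> \<forall>m<2 * N. rnode xb m \<le> rnode xb (Suc m)"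
  using rnode_less by (simp add: less_imp_le)

lemma refined_cell_indices:
  assumes ms: "mesh xb N" and "m < 2 * N" "rnode xb m < x" "x < rnode xb (Suc m)"
  shows "pidx xb N x = m div 2" "didx xb N x = rdual N m" "dsh xb N x = x + rshift xb N m"
proof -
  define i where "i = m div 2"
  have i: "i < N" "m = 2 * i \<or> m = Suc (2 * i)" using \<open>m < 2 * N\<close> by (auto simp: i_def)
  have cb: "xb i < cc xb i" "cc xb i < xb (Suc i)" using mesh_centre_bounds[OF ms i(1)] by auto
  have left: "xb i < x \<and> x < cc xb i" if "m = 2 * i" using that assms(3,4) by simp
  have right: "cc xb i < x \<and> x < xb (Suc i)" if "m = Suc (2 * i)" using that assms(3,4) by simp
  have "pidx xb N x = i" using i left right cb by (intro pidx_eq[OF ms i(1)]) auto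
  moreover have "didx xb N x = rdual N m \<and> dsh xb N x = x + rshift xb N m"
  proof (cases "m = Suc (2 * i)")
    case True
    have "Suc i < N \<Longrightarrow> x < cc xb (Suc i)" using mesh_centre_bounds[OF ms, of "Suc i"] right True by auto
    then show ?thesis using True didx_eq[OF ms i(1), of x] right by auto
  next
    case False
    then have m: "m = 2 * i" using i by simp
    show ?thesis
    proof (cases i)
      case 0
      then show ?thesis using didx_below_centre[of x xb N] left m by simp
    next
      case (Suc j)
      have "cc xb j < xb i" using mesh_centre_bounds[OF ms, of j] Suc i(1) by simp
      then have "didx xb N x = j \<and> dsh xb N x = x"
        using didx_eq[OF ms, of j x] Suc i(1) left[OF m] by auto
      then show ?thesis using m Suc by (simp add: rdual_def)
    qed
  qed
  ultimately show "pidx xb N x = m div 2" "didx xb N x = rdual N m" "dsh xb N x = x + rshift xb N m"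
    by (auto simp: i_def)
qed

lemma mono_chain_le:
  fixes t :: "nat \<Rightarrow> real"
  assumes "\<forall>m<M. t m \<le> t (Suc m)" "i \<le> j" "j \<le> M"
  shows "t i \<le> t j"
  using assms(2,3)
proof (induction j)
  case (Suc j)
  with assms(1) show ?case by (cases "i = Suc j") (auto intro: order.trans)
qed simp

lemma has_integral_partition:
  fixes f :: "real \<Rightarrow> real"
  assumes "\<forall>m<M. t m \<le> t (Suc m)" "\<And>m. m < M \<Longrightarrow> (f has_integral I m) {t m..t (Suc m)}"
  shows "(f has_integral (\<Sum>m<M. I m)) {t 0..t M}"
  using assms
proof (induction M)
  case 0
  then show ?case by (simp add: has_integral_refl)
next
  case (Suc M)
  have "t 0 \<le> t M" using mono_chain_le[OF Suc.prems(1), of 0 M] by simp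
  then show ?case using has_integral_combine[OF _ _ Suc.IH Suc.prems(2)] Suc.prems by simp
qed

lemma integral_partition:
  fixes f :: "real \<Rightarrow> real"
  assumes "\<forall>m<M. t m \<le> t (Suc m)" "f integrable_on {t 0..t M}"
  shows "integral {t 0..t M} f = (\<Sum>m<M. integral {t m..t (Suc m)} f)"
proof -
  have "f integrable_on {t m..t (Suc m)}" if "m < M" for m
    by (rule integrable_subinterval_real[OF assms(2)]) (use mono_chain_le[OF assms(1)] that in auto)
  then have "(f has_integral (\<Sum>m<M. integral {t m..t (Suc m)} f)) {t 0..t M}"
    by (intro has_integral_partition[OF assms(1)] integrable_integral)
  then show ?thesis by (rule integral_unique)
qed

lemma has_integral_interior_eq:
  fixes f g :: "real \<Rightarrow> real"
  assumes "a \<le> b" "continuous_on {a..b} g" "\<And>x. a < x \<Longrightarrow> x < b \<Longrightarrow> f x = g x"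
  shows "(f has_integral integral {a..b} g) {a..b}"
proof -
  have "(g has_integral integral {a..b} g) {a..b}"
    using integrable_continuous_real[OF assms(2)] by (simp add: has_integral_integral)
  then show ?thesis using has_integral_spike_finite[of "{a, b}" "{a..b}" f g] assms by auto
qed

lemma has_integral_piecewise_continuous:
  fixes f :: "real \<Rightarrow> real"
  assumes "\<forall>m<M. t m \<le> t (Suc m)" "\<And>m. m < M \<Longrightarrow> continuous_on {t m..t (Suc m)} (g m)"
    "\<And>m x. m < M \<Longrightarrow> t m < x \<Longrightarrow> x < t (Suc m) \<Longrightarrow> f x = g m x"
  shows "(f has_integral (\<Sum>m<M. integral {t m..t (Suc m)} (g m))) {t 0..t M}"
  using assms by (intro has_integral_partition has_integral_interior_eq) auto

lemma continuous_on_shift: "continuous_on UNIV f \<Longrightarrow> continuous_on S (\<lambda>x::real. f (x + c))"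
  by (rule continuous_on_compose2[of UNIV f]) (auto intro!: continuous_intros)

lemma staggered_integrable:
  fixes h :: "nat \<Rightarrow> nat \<Rightarrow> real \<Rightarrow> real \<Rightarrow> real"
  assumes ms: "mesh xb N" and cont: "\<And>i d c. continuous_on UNIV (\<lambda>x. h i d (x + c) x)"
  shows "(\<lambda>x. h (pidx xb N x) (didx xb N x) (dsh xb N x) x) integrable_on {xb 0..xb N}"
proof -
  have "((\<lambda>x. h (pidx xb N x) (didx xb N x) (dsh xb N x) x) has_integral
      (\<Sum>m<2 * N. integral {rnode xb m..rnode xb (Suc m)}
         (\<lambda>x. h (m div 2) (rdual N m) (x + rshift xb N m) x))) {rnode xb 0..rnode xb (2 * N)}"
    by (rule has_integral_piecewise_continuous[OF rnode_mono[OF ms],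
          where g = "\<lambda>m x. h (m div 2) (rdual N m) (x + rshift xb N m) x"])
       (use refined_cell_indices[OF ms] continuous_on_subset[OF cont] in auto)
  then show ?thesis by auto
qed

section \<open>Integration by parts on the staggered mesh\<close>

definition pw_primal :: "(nat \<Rightarrow> real) \<Rightarrow> nat \<Rightarrow> (nat \<Rightarrow> real \<Rightarrow> real) \<Rightarrow> real \<Rightarrow> real" where
  "pw_primal xb N P x = P (pidx xb N x) x"

definition pw_dual :: "(nat \<Rightarrow> real) \<Rightarrow> nat \<Rightarrow> (nat \<Rightarrow> real \<Rightarrow> real) \<Rightarrow> real \<Rightarrow> real" where
  "pw_dual xb N Q x = Q (didx xb N x) (dsh xb N x)"

definition primal_flux ::
    "(nat \<Rightarrow> real) \<Rightarrow> nat \<Rightarrow> (real \<Rightarrow> real) \<Rightarrow> (nat \<Rightarrow> real \<Rightarrow> real) \<Rightarrow> real" where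
  "primal_flux xb N w P = (\<Sum>i<N. w (xb (Suc i)) * P i (xb (Suc i)) - w (xb i) * P i (xb i))"

definition dual_flux ::
    "(nat \<Rightarrow> real) \<Rightarrow> nat \<Rightarrow> (real \<Rightarrow> real) \<Rightarrow> (nat \<Rightarrow> real \<Rightarrow> real) \<Rightarrow> real" where
  "dual_flux xb N v Q = (\<Sum>j<N. v (per xb N (dn xb N (Suc j))) * Q j (dn xb N (Suc j))
                                - v (per xb N (dn xb N j)) * Q j (dn xb N j))"

lemma pw_primal_dual_integrable:
  assumes ms: "mesh xb N" and "\<And>i. continuous_on UNIV (P i)" "\<And>j. continuous_on UNIV (Q j)"
  shows "(\<lambda>x. pw_primal xb N P x * pw_dual xb N Q x) integrable_on {xb 0..xb N}"
    "(\<lambda>x. pw_dual xb N Q x * pw_primal xb N P x) integrable_on {xb 0..xb N}"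
  using staggered_integrable[OF ms, of "\<lambda>i d z x. P i x * Q d z"]
    staggered_integrable[OF ms, of "\<lambda>i d z x. Q d z * P i x"] assms(2,3)
  by (simp_all add: pw_primal_def pw_dual_def continuous_on_mult continuous_on_shift)

lemma pw_dual_at_node_Suc:
  assumes ms: "mesh xb N" and "i < N"
  shows "pw_dual xb N Q (xb (Suc i)) = Q i (xb (Suc i))"
proof -
  have "Suc i < N \<Longrightarrow> xb (Suc i) < cc xb (Suc i)" using mesh_centre_bounds[OF ms] by auto
  moreover have "cc xb i \<le> xb (Suc i)" using mesh_centre_bounds[OF assms] by simp
  ultimately show ?thesis using didx_eq[OF assms] by (simp add: pw_dual_def)
qed

lemma pw_dual_at_node:
  assumes ms: "mesh xb N" and "i < N"
  shows "pw_dual xb N Q (xb i) = Q (rdual N (2 * i)) (xb i + rshift xb N (2 * i))"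
proof (cases i)
  case 0
  then show ?thesis using mesh_centre_bounds[OF assms] didx_below_centre[of "xb 0" xb N]
    by (simp add: pw_dual_def)
next
  case (Suc j)
  then show ?thesis using pw_dual_at_node_Suc[OF ms, of j] assms(2) by simp
qed

lemma pw_primal_at_centre:
  assumes ms: "mesh xb N" and "j < N"
  shows "pw_primal xb N P (per xb N (cc xb j)) = P j (cc xb j)"
proof -
  have "cc xb j < xb (Suc j)" "xb (Suc j) \<le> xb N"
    using mesh_centre_bounds[OF assms] mesh_node_le[OF ms] assms(2) by auto
  moreover have "pidx xb N (cc xb j) = j"
    using pidx_eq[OF assms] mesh_centre_bounds[OF assms] by simp
  ultimately show ?thesis by (simp add: pw_primal_def per_def)
qed

lemma pw_primal_at_shifted_centre:
  assumes ms: "mesh xb N"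
  shows "pw_primal xb N P (per xb N (cc xb 0 + (xb N - xb 0))) = P 0 (cc xb 0)"
proof -
  have "0 < N" using ms by (simp add: mesh_def)
  then show ?thesis
    using pw_primal_at_centre[OF ms \<open>0 < N\<close>] mesh_centre_bounds[OF ms \<open>0 < N\<close>]
      mesh_node_le[OF ms, of 1 N]
    by (simp add: per_def)
qed

lemma sum_even_odd: "(\<Sum>m<2 * N. f m) = (\<Sum>i<N. f (2 * i) + f (Suc (2 * i)))"
  by (induction N) (simp_all add: sum.distrib ac_simps)

lemma sum_rotate:
  assumes "1 \<le> N"
  shows "(\<Sum>j<N. if Suc j < N then D (Suc j) else D 0) = (\<Sum>i<N. D i)"
proof -
  obtain n where N: "N = Suc n" using assms by (cases N) auto
  have "(\<Sum>j<Suc n. if Suc j < Suc n then D (Suc j) else D 0) = (\<Sum>j<n. D (Suc j)) + D 0"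
    by (simp add: sum.lessThan_Suc)
  also have "\<dots> = (\<Sum>i<Suc n. D i)" by (subst sum.lessThan_Suc_shift) (simp add: add.commute)
  finally show ?thesis using N by simp
qed

lemma refined_ftc:
  assumes ms: "mesh xb N"
    and dP: "\<And>i x. (P i has_real_derivative P' i x) (at x)"
    and dQ: "\<And>j x. (Q j has_real_derivative Q' j x) (at x)"
  defines "G \<equiv> \<lambda>m x. Q (rdual N m) (x + rshift xb N m) * P (m div 2) x"
  shows "((\<lambda>x. pw_dual xb N Q x * pw_primal xb N P' x + pw_primal xb N P x * pw_dual xb N Q' x)
           has_integral (\<Sum>m<2 * N. G m (rnode xb (Suc m)) - G m (rnode xb m))) {xb 0..xb N}"
proof -
  have "((\<lambda>x. pw_dual xb N Q x * pw_primal xb N P' x + pw_primal xb N P x * pw_dual xb N Q' x)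
          has_integral (G m (rnode xb (Suc m)) - G m (rnode xb m))) {rnode xb m..rnode xb (Suc m)}"
    if m: "m < 2 * N" for m
  proof -
    let ?d = "rdual N m" and ?c = "rshift xb N m" and ?i = "m div 2"
    have dG: "(G m has_real_derivative Q' ?d (x + ?c) * P ?i x + Q ?d (x + ?c) * P' ?i x) (at x)" for x
      using DERIV_mult[OF dQ[of ?d "x + ?c", unfolded DERIV_shift] dP]
      by (simp add: G_def mult.commute)
    have "((\<lambda>x. Q' ?d (x + ?c) * P ?i x + Q ?d (x + ?c) * P' ?i x)
            has_integral (G m (rnode xb (Suc m)) - G m (rnode xb m))) {rnode xb m..rnode xb (Suc m)}"
      using rnode_less[OF ms m] dG
      by (intro fundamental_theorem_of_calculus_interior DERIV_continuous_on)
         (auto simp: has_real_derivative_iff_has_vector_derivative[symmetric] intro: has_field_derivative_at_within)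
    then show ?thesis
      by (rule has_integral_spike_finite[of "{rnode xb m, rnode xb (Suc m)}", rotated 2])
         (auto simp: pw_primal_def pw_dual_def refined_cell_indices[OF ms m] algebra_simps)
  qed
  from has_integral_partition[OF rnode_mono[OF ms] this] show ?thesis by simp
qed

lemma refined_boundary_sum:
  fixes P Q :: "nat \<Rightarrow> real \<Rightarrow> real"
  assumes ms: "mesh xb N"
  defines "G \<equiv> \<lambda>m x. Q (rdual N m) (x + rshift xb N m) * P (m div 2) x"
  shows "(\<Sum>m<2 * N. G m (rnode xb (Suc m)) - G m (rnode xb m))
       = primal_flux xb N (pw_dual xb N Q) P + dual_flux xb N (pw_primal xb N P) Q"
proof -
  have N: "1 \<le> N" using ms by (simp add: mesh_def)
  have "(\<Sum>m<2 * N. G m (rnode xb (Suc m)) - G m (rnode xb m))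
      = (\<Sum>i<N. G (Suc (2 * i)) (xb (Suc i)) - G (2 * i) (xb i))
        + ((\<Sum>i<N. G (2 * i) (cc xb i)) - (\<Sum>i<N. G (Suc (2 * i)) (cc xb i)))"
    by (simp only: sum_even_odd rnode_even rnode_odd rnode_even_Suc)
       (simp add: sum.distrib sum_subtractf algebra_simps)
  also have "(\<Sum>i<N. G (Suc (2 * i)) (xb (Suc i)) - G (2 * i) (xb i))
      = primal_flux xb N (pw_dual xb N Q) P"
    unfolding primal_flux_def G_def
    by (rule sum.cong) (simp_all add: pw_dual_at_node_Suc[OF ms] pw_dual_at_node[OF ms])
  also have "(\<Sum>i<N. G (2 * i) (cc xb i)) - (\<Sum>i<N. G (Suc (2 * i)) (cc xb i))
      = dual_flux xb N (pw_primal xb N P) Q"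
  proof -
    define D where "D i = G (2 * i) (cc xb i)" for i
    have "pw_primal xb N P (per xb N (dn xb N (Suc j))) * Q j (dn xb N (Suc j))
        = (if Suc j < N then D (Suc j) else D 0)" if "j < N" for j
      using that pw_primal_at_centre[OF ms, of "Suc j"] pw_primal_at_shifted_centre[OF ms]
      by (cases "Suc j = N") (auto simp: D_def G_def dn_def mult.commute[of "Q _ _"])
    then have "(\<Sum>j<N. pw_primal xb N P (per xb N (dn xb N (Suc j))) * Q j (dn xb N (Suc j)))
        = (\<Sum>i<N. G (2 * i) (cc xb i))"
      using sum_rotate[OF N, of D] by (simp add: D_def)
    moreover have "(\<Sum>j<N. pw_primal xb N P (per xb N (dn xb N j)) * Q j (dn xb N j))
        = (\<Sum>i<N. G (Suc (2 * i)) (cc xb i))"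
      by (rule sum.cong) (simp_all add: pw_primal_at_centre[OF ms] G_def dn_def mult.commute[of "Q _ _"])
    ultimately show ?thesis by (simp add: dual_flux_def sum_subtractf)
  qed
  finally show ?thesis .
qed

lemma pw_integration_by_parts:
  assumes ms: "mesh xb N"
    and dP: "\<And>i x. (P i has_real_derivative P' i x) (at x)"
    and dQ: "\<And>j x. (Q j has_real_derivative Q' j x) (at x)"
    and cP': "\<And>i. continuous_on UNIV (P' i)" and cQ': "\<And>j. continuous_on UNIV (Q' j)"
  shows "integral {xb 0..xb N} (\<lambda>x. pw_dual xb N Q x * pw_primal xb N P' x)
       + integral {xb 0..xb N} (\<lambda>x. pw_primal xb N P x * pw_dual xb N Q' x)
       = primal_flux xb N (pw_dual xb N Q) P + dual_flux xb N (pw_primal xb N P) Q"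
proof -
  have cP: "continuous_on UNIV (P i)" and cQ: "continuous_on UNIV (Q j)" for i j
    using dP dQ by (blast intro: DERIV_continuous_on has_field_derivative_at_within)+
  show ?thesis
    using integral_add[OF pw_primal_dual_integrable(2)[OF ms cP' cQ] pw_primal_dual_integrable(1)[OF ms cP cQ']]
      integral_unique[OF refined_ftc[OF ms dP dQ]] refined_boundary_sum[OF ms]
    by simp
qed

lemma Vh1_eq_pw_primal: "Vh1 xb N p = pw_primal xb N (\<lambda>i. poly (p i))"
  by (simp add: fun_eq_iff Vh1_def pw_primal_def)

lemma Wh1_eq_pw_dual: "Wh1 xb N q = pw_dual xb N (\<lambda>j. poly (q j))"
  by (simp add: fun_eq_iff Wh1_def pw_dual_def)

lemma Vh1_Wh1_integrable:
  assumes "mesh xb N"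
  shows "(\<lambda>x. Vh1 xb N p x * Wh1 xb N q x) integrable_on {xb 0..xb N}"
    "(\<lambda>x. Wh1 xb N q x * Vh1 xb N p x) integrable_on {xb 0..xb N}"
  unfolding Vh1_eq_pw_primal Wh1_eq_pw_dual
  by (intro pw_primal_dual_integrable[OF assms] continuous_intros)+

lemma H1_integration_by_parts:
  assumes "mesh xb N"
  shows "integral {xb 0..xb N} (\<lambda>x. Wh1 xb N q x * Vh1 xb N (\<lambda>i. pderiv (r i)) x)
       + integral {xb 0..xb N} (\<lambda>x. Vh1 xb N r x * Wh1 xb N (\<lambda>j. pderiv (q j)) x)
       = primal_flux xb N (Wh1 xb N q) (\<lambda>i. poly (r i))
       + dual_flux xb N (Vh1 xb N r) (\<lambda>j. poly (q j))"
  unfolding Vh1_eq_pw_primal Wh1_eq_pw_dual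
  by (rule pw_integration_by_parts[OF assms]) (auto intro: poly_DERIV continuous_intros)

lemma H1_decompose:
  assumes ms: "mesh xb N"
  shows "H1 \<beta> \<tau> xb N (p, q) (r, s) =
     - (1 / \<tau>) * integral {xb 0..xb N} (\<lambda>x. (Vh1 xb N p x - Wh1 xb N q x) * (Vh1 xb N r x - Wh1 xb N s x))
     + \<beta> * (integral {xb 0..xb N} (\<lambda>x. Wh1 xb N q x * Vh1 xb N (\<lambda>i. pderiv (r i)) x)
             - primal_flux xb N (Wh1 xb N q) (\<lambda>i. poly (r i)))
     + \<beta> * (integral {xb 0..xb N} (\<lambda>x. Vh1 xb N p x * Wh1 xb N (\<lambda>j. pderiv (s j)) x)
             - dual_flux xb N (Vh1 xb N p) (\<lambda>j. poly (s j)))"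
proof -
  have "integral {xb 0..xb N} (\<lambda>x. \<beta> * Wh1 xb N q x * Vh1 xb N (\<lambda>i. pderiv (r i)) x
                                 + \<beta> * Vh1 xb N p x * Wh1 xb N (\<lambda>j. pderiv (s j)) x)
      = \<beta> * integral {xb 0..xb N} (\<lambda>x. Wh1 xb N q x * Vh1 xb N (\<lambda>i. pderiv (r i)) x)
      + \<beta> * integral {xb 0..xb N} (\<lambda>x. Vh1 xb N p x * Wh1 xb N (\<lambda>j. pderiv (s j)) x)"
    using integral_add[OF integrable_on_cmult_left[OF Vh1_Wh1_integrable(2)[OF ms]]
                          integrable_on_cmult_left[OF Vh1_Wh1_integrable(1)[OF ms]], of \<beta> _ _ \<beta>]
    by (simp add: mult.assoc)
  moreover have "(\<Sum>i<N. \<beta> * Wh1 xb N q (xb (Suc i)) * poly (r i) (xb (Suc i))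
                   - \<beta> * Wh1 xb N q (xb i) * poly (r i) (xb i)
                   + \<beta> * Vh1 xb N p (per xb N (dn xb N (Suc i))) * poly (s i) (dn xb N (Suc i))
                   - \<beta> * Vh1 xb N p (per xb N (dn xb N i)) * poly (s i) (dn xb N i))
      = \<beta> * primal_flux xb N (Wh1 xb N q) (\<lambda>i. poly (r i))
      + \<beta> * dual_flux xb N (Vh1 xb N p) (\<lambda>j. poly (s j))"
    by (simp add: primal_flux_def dual_flux_def sum_distrib_left sum.distrib[symmetric] algebra_simps)
  ultimately show ?thesis by (simp add: H1_def algebra_simps)
qed

lemma scaled_pair_cancel:
  fixes a b p d c :: real
  assumes "a + b = p + d"
  shows "c * (a - p) + c * (b - d) = 0"
proof -
  have "c * (a - p) + c * (b - d) = c * ((a + b) - (p + d))" by (simp add: algebra_simps)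
  with assms show ?thesis by simp
qed

lemma neg_divide_add_same:
  fixes m m' \<tau> :: real
  assumes "m' = m"
  shows "- (1 / \<tau>) * m + - (1 / \<tau>) * m' = - (2 / \<tau>) * m"
  using assms by (simp add: divide_inverse algebra_simps)

lemma H1_skew_symmetric:
  assumes ms: "mesh xb N"
  shows "H1 \<beta> \<tau> xb N (h1, h2) (g1, g2) + H1 \<beta> \<tau> xb N (g1, g2) (h1, h2)
       = - (2 / \<tau>) * integral {xb 0..xb N}
           (\<lambda>x. (Vh1 xb N h1 x - Wh1 xb N h2 x) * (Vh1 xb N g1 x - Wh1 xb N g2 x))"
proof -
  have "integral {xb 0..xb N} (\<lambda>x. (Vh1 xb N g1 x - Wh1 xb N g2 x) * (Vh1 xb N h1 x - Wh1 xb N h2 x))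
      = integral {xb 0..xb N} (\<lambda>x. (Vh1 xb N h1 x - Wh1 xb N h2 x) * (Vh1 xb N g1 x - Wh1 xb N g2 x))"
    by (simp add: mult.commute)
  from neg_divide_add_same[OF this, of \<tau>] show ?thesis
    unfolding H1_decompose[OF ms]
    using scaled_pair_cancel[OF H1_integration_by_parts[OF ms, of h2 g1], of \<beta>]
      scaled_pair_cancel[OF H1_integration_by_parts[OF ms, of g2 h1], of \<beta>]
    by linarith
qed

lemma integral_primal_cells:
  fixes f :: "real \<Rightarrow> real"
  assumes ms: "mesh xb N" and f: "f integrable_on {xb 0..xb N}"
    and a: "\<And>i x. i < N \<Longrightarrow> xb i < x \<Longrightarrow> x < xb (Suc i) \<Longrightarrow> a i x = f x"
  shows "integral {xb 0..xb N} f = (\<Sum>i<N. integral {xb i..xb (Suc i)} (a i))"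
proof -
  have mono: "\<forall>i<N. xb i \<le> xb (Suc i)" using ms by (simp add: mesh_def less_imp_le)
  have "integral {xb i..xb (Suc i)} f = integral {xb i..xb (Suc i)} (a i)" if "i < N" for i
    by (rule integral_spike[of "{xb i, xb (Suc i)}"]) (use a that in auto)
  then show ?thesis using integral_partition[OF mono f] by simp
qed

lemma integral_wrapped_dual_cell:
  fixes f g :: "real \<Rightarrow> real"
  assumes ms: "mesh xb N" and "i < N" and f: "f integrable_on {xb 0..xb N}"
    and g: "\<And>x. cc xb i < x \<Longrightarrow> x < xb N \<Longrightarrow> g x = f x"
    and g_wrap: "\<And>x. xb N < x \<Longrightarrow> x < cc xb 0 + (xb N - xb 0) \<Longrightarrow> g x = f (x - (xb N - xb 0))"
  shows "integral {cc xb i..cc xb 0 + (xb N - xb 0)} g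
       = integral {cc xb i..xb N} f + integral {xb 0..cc xb 0} f"
proof -
  define L where "L = xb N - xb 0"
  have cb: "xb 0 < cc xb 0" "xb i < cc xb i" "cc xb i < xb (Suc i)"
    using mesh_centre_bounds[OF ms] \<open>i < N\<close> by auto
  have "xb 0 \<le> xb i" "xb (Suc i) \<le> xb N" using mesh_node_le[OF ms] \<open>i < N\<close> by auto
  then have "(f has_integral integral {cc xb i..xb N} f) {cc xb i..xb N}"
    using cb by (intro integrable_integral integrable_subinterval_real[OF f]) auto
  then have left: "(g has_integral integral {cc xb i..xb N} f) {cc xb i..xb N}"
    by (rule has_integral_spike_finite[of "{cc xb i, xb N}", rotated 2]) (auto intro: g)
  have "cc xb 0 \<le> xb N" using mesh_centre_bounds[OF ms, of 0] mesh_node_le[OF ms, of 1 N] \<open>i < N\<close> by simp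
  then have "(f has_integral integral {xb 0..cc xb 0} f) {xb 0..cc xb 0}"
    using cb by (intro integrable_integral integrable_subinterval_real[OF f]) auto
  then have "((\<lambda>x. f (x + - L)) has_integral integral {xb 0..cc xb 0} f) {xb 0 - - L..cc xb 0 - - L}"
    by (rule has_integral_shift_real_ivl)
  moreover have "xb 0 - - L = xb N" "cc xb 0 - - L = cc xb 0 + L" by (simp_all add: L_def)
  ultimately have "((\<lambda>x. f (x + - L)) has_integral integral {xb 0..cc xb 0} f) {xb N..cc xb 0 + L}"
    by simp
  then have right: "(g has_integral integral {xb 0..cc xb 0} f) {xb N..cc xb 0 + L}"
  proof (rule has_integral_spike_finite[of "{xb N, cc xb 0 + L}", rotated 2])
    fix x assume "x \<in> {xb N..cc xb 0 + L} - {xb N, cc xb 0 + L}"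
    then show "g x = f (x + - L)" using g_wrap[of x] by (simp add: L_def algebra_simps)
  qed simp
  have "cc xb i \<le> xb N" "xb N \<le> cc xb 0 + L" using cb \<open>xb (Suc i) \<le> xb N\<close> by (simp_all add: L_def)
  from has_integral_combine[OF this left right] show ?thesis
    unfolding L_def by (simp add: integral_unique)
qed

lemma integral_dual_cells:
  fixes f :: "real \<Rightarrow> real"
  assumes ms: "mesh xb N" and f: "f integrable_on {xb 0..xb N}"
    and b: "\<And>i x. i < N \<Longrightarrow> cc xb i < x \<Longrightarrow> x < dn xb N (Suc i) \<Longrightarrow> x < xb N \<Longrightarrow> b i x = f x"
    and b_wrap: "\<And>x. xb N < x \<Longrightarrow> x < cc xb 0 + (xb N - xb 0) \<Longrightarrow>
                   b (N - 1) x = f (x - (xb N - xb 0))"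
  shows "integral {xb 0..xb N} f = (\<Sum>i<N. integral {dn xb N i..dn xb N (Suc i)} (b i))"
proof -
  obtain n where N: "N = Suc n" using ms by (cases N) (auto simp: mesh_def)
  define t where "t i = (if i < N then cc xb i else xb N)" for i
  have cb: "xb 0 < cc xb 0" "cc xb n < xb N" using mesh_centre_bounds[OF ms, of 0] mesh_centre_bounds[OF ms, of n] N
    by auto
  have cN: "cc xb 0 \<le> xb N" using mesh_centre_bounds[OF ms, of 0] mesh_node_le[OF ms, of 1 N] N by simp
  have t_mono: "\<forall>i<N. t i \<le> t (Suc i)"
  proof (intro allI impI)
    fix i assume "i < N"
    show "t i \<le> t (Suc i)"
    proof (cases "Suc i < N")
      case True
      then show ?thesis using mesh_centre_less[OF ms, of i "Suc i"] by (simp add: t_def)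
    next
      case False
      then have "i = n" using \<open>i < N\<close> N by simp
      then show ?thesis using cb N by (simp add: t_def)
    qed
  qed
  have f_right: "f integrable_on {t 0..t N}"
    by (rule integrable_subinterval_real[OF f]) (use cb N in \<open>auto simp: t_def\<close>)
  have "integral {xb 0..xb N} f = integral {xb 0..cc xb 0} f + (\<Sum>i<N. integral {t i..t (Suc i)} f)"
    using Henstock_Kurzweil_Integration.integral_combine[OF less_imp_le[OF cb(1)] cN f] integral_partition[OF t_mono f_right] N
    by (simp add: t_def)
  also have "\<dots> = (\<Sum>i<n. integral {t i..t (Suc i)} f) + (integral {t n..t N} f + integral {xb 0..cc xb 0} f)"
    using N by simp
  also have "(\<Sum>i<n. integral {t i..t (Suc i)} f) = (\<Sum>i<n. integral {dn xb N i..dn xb N (Suc i)} (b i))"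
  proof (rule sum.cong[OF refl])
    fix i assume "i \<in> {..<n}"
    then have i: "Suc i < N" using N by simp
    have "cc xb (Suc i) < xb N" using mesh_centre_bounds[OF ms i] mesh_node_le[OF ms, of "Suc (Suc i)" N] i
      by simp
    moreover have e: "t i = cc xb i" "t (Suc i) = cc xb (Suc i)"
        "dn xb N i = cc xb i" "dn xb N (Suc i) = cc xb (Suc i)"
      using i by (simp_all add: t_def dn_def)
    ultimately show "integral {t i..t (Suc i)} f = integral {dn xb N i..dn xb N (Suc i)} (b i)"
      unfolding e using i by (intro integral_spike[of "{cc xb i, cc xb (Suc i)}"]) (auto simp: e intro!: b)
  qed
  also have "integral {t n..t N} f + integral {xb 0..cc xb 0} f = integral {dn xb N n..dn xb N N} (b n)"
  proof -
    have "t n = cc xb n" "t N = xb N" "dn xb N n = cc xb n" "dn xb N N = cc xb 0 + (xb N - xb 0)"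
      using N by (simp_all add: t_def dn_def)
    moreover have "integral {cc xb n..cc xb 0 + (xb N - xb 0)} (b n)
        = integral {cc xb n..xb N} f + integral {xb 0..cc xb 0} f"
      using N cb by (intro integral_wrapped_dual_cell[OF ms _ f]) (auto simp: dn_def intro!: b b_wrap[unfolded N, simplified])
    ultimately show ?thesis by simp
  qed
  finally show ?thesis using N by simp
qed

lemma integral_swap_Times:
  fixes F :: "real \<times> real \<Rightarrow> real"
  assumes "F integrable_on {a..b} \<times> {c..d}"
  shows "integral ({c..d} \<times> {a..b}) (\<lambda>(y, x). F (x, y)) = integral ({a..b} \<times> {c..d}) F"
proof -
  have "(F has_integral integral ({a..b} \<times> {c..d}) F) (cbox (a, c) (b, d))"
    using assms by (simp add: cbox_Pair_eq has_integral_integral)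
  then have "((\<lambda>z. F (prod.swap z)) has_integral integral ({a..b} \<times> {c..d}) F)
      (prod.swap ` cbox (a, c) (b, d))"
  proof (rule has_integral_twiddle[of 1 prod.swap prod.swap, simplified, rotated -1])
    show "\<And>u v. measure lborel (prod.swap ` cbox u v) = measure lborel (cbox u v)"
      by (metis content_Pair mult.commute old.prod.exhaust swap_cbox_Pair)
  qed (use isCont_swap in fastforce)+
  then have "((\<lambda>z. F (prod.swap z)) has_integral integral ({a..b} \<times> {c..d}) F) ({c..d} \<times> {a..b})"
    by (simp add: cbox_Pair_eq product_swap)
  then show ?thesis by (simp add: case_prod_unfold prod.swap_def integral_unique)
qed

lemma has_integral_cell:
  fixes F G :: "real \<times> real \<Rightarrow> real"
  assumes "a \<le> b" "c \<le> d" and cG: "continuous_on (cbox (a, c) (b, d)) G"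
    and FG: "\<And>x y. a < x \<Longrightarrow> x < b \<Longrightarrow> c < y \<Longrightarrow> y < d \<Longrightarrow> F (x, y) = G (x, y)"
  shows "(F has_integral integral (cbox (a, c) (b, d)) G) (cbox (a, c) (b, d))"
    and "((\<lambda>x. integral {c..d} (\<lambda>y. F (x, y))) has_integral integral (cbox (a, c) (b, d)) G) {a..b}"
    and "a < x \<Longrightarrow> x < b \<Longrightarrow> (\<lambda>y. F (x, y)) integrable_on {c..d}"
proof -
  have "(G has_integral integral (cbox (a, c) (b, d)) G) (cbox (a, c) (b, d))"
    using integrable_continuous[OF cG] by (simp add: has_integral_integral)
  then show "(F has_integral integral (cbox (a, c) (b, d)) G) (cbox (a, c) (b, d))"
  proof (rule has_integral_spike[OF negligible_frontier_interval, rotated])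
    fix p assume "p \<in> cbox (a, c) (b, d) - (cbox (a, c) (b, d) - box (a, c) (b, d))"
    then show "F p = G p" using FG by (cases p) (auto simp: mem_box Basis_prod_def)
  qed
  have line: "((\<lambda>y. F (x, y)) has_integral integral {c..d} (\<lambda>y. G (x, y))) {c..d}"
    if "a < x" "x < b" for x
  proof -
    have "((\<lambda>y. G (x, y)) has_integral integral {c..d} (\<lambda>y. G (x, y))) {c..d}"
      using continuous_on_imp_integrable_on_Pair1[OF cG, of x] that by (simp add: has_integral_integral)
    then show ?thesis
      by (rule has_integral_spike_finite[of "{c, d}", rotated 2]) (use FG that in auto)
  qed
  then show "a < x \<Longrightarrow> x < b \<Longrightarrow> (\<lambda>y. F (x, y)) integrable_on {c..d}" by blast
  have "((\<lambda>x. integral {c..d} (\<lambda>y. G (x, y))) has_integral integral (cbox (a, c) (b, d)) G) {a..b}"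
    using integral_integrable_2dim[OF cG] integral_prod_continuous[OF cG]
    by (simp add: has_integral_integral)
  then show "((\<lambda>x. integral {c..d} (\<lambda>y. F (x, y))) has_integral integral (cbox (a, c) (b, d)) G) {a..b}"
  proof (rule has_integral_spike_finite[of "{a, b}", rotated 2])
    fix x assume "x \<in> {a..b} - {a, b}"
    then show "integral {c..d} (\<lambda>y. F (x, y)) = integral {c..d} (\<lambda>y. G (x, y))"
      using integral_unique[OF line] by auto
  qed simp
qed

lemma has_integral_combine_x:
  fixes F :: "real \<times> real \<Rightarrow> real"
  assumes "a \<le> m" "m \<le> b"
    "(F has_integral i) (cbox (a, c) (m, d))" "(F has_integral j) (cbox (m, c) (b, d))"
  shows "(F has_integral (i + j)) (cbox (a, c) (b, d))"
proof (rule has_integral_split[where k = "(1, 0)" and c = m])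
  have "cbox (a, c) (b, d) \<inter> {x. x \<bullet> (1, 0) \<le> m} = cbox (a, c) (m, d)"
    "cbox (a, c) (b, d) \<inter> {x. m \<le> x \<bullet> (1, 0)} = cbox (m, c) (b, d)"
    using assms(1,2) by (auto simp: cbox_Pair_eq inner_prod_def)
  then show "(F has_integral i) (cbox (a, c) (b, d) \<inter> {x. x \<bullet> (1, 0) \<le> m})"
    "(F has_integral j) (cbox (a, c) (b, d) \<inter> {x. m \<le> x \<bullet> (1, 0)})"
    using assms(3,4) by simp_all
qed (simp add: Basis_prod_def)

lemma has_integral_combine_y:
  fixes F :: "real \<times> real \<Rightarrow> real"
  assumes "c \<le> m" "m \<le> d"
    "(F has_integral i) (cbox (a, c) (b, m))" "(F has_integral j) (cbox (a, m) (b, d))"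
  shows "(F has_integral (i + j)) (cbox (a, c) (b, d))"
proof (rule has_integral_split[where k = "(0, 1)" and c = m])
  have "cbox (a, c) (b, d) \<inter> {x. x \<bullet> (0, 1) \<le> m} = cbox (a, c) (b, m)"
    "cbox (a, c) (b, d) \<inter> {x. m \<le> x \<bullet> (0, 1)} = cbox (a, m) (b, d)"
    using assms(1,2) by (auto simp: cbox_Pair_eq inner_prod_def)
  then show "(F has_integral i) (cbox (a, c) (b, d) \<inter> {x. x \<bullet> (0, 1) \<le> m})"
    "(F has_integral j) (cbox (a, c) (b, d) \<inter> {x. m \<le> x \<bullet> (0, 1)})"
    using assms(3,4) by simp_all
qed (simp add: Basis_prod_def)

lemma has_integral_grid:
  fixes F :: "real \<times> real \<Rightarrow> real"
  assumes s: "\<forall>m<M. s m \<le> s (Suc m)" and t: "\<forall>l<K. t l \<le> t (Suc l)"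
    and I: "\<And>m l. m < M \<Longrightarrow> l < K \<Longrightarrow> (F has_integral I m l) (cbox (s m, t l) (s (Suc m), t (Suc l)))"
  shows "(F has_integral (\<Sum>m<M. \<Sum>l<K. I m l)) (cbox (s 0, t 0) (s M, t K))"
proof -
  have column: "(F has_integral (\<Sum>l<L. I m l)) (cbox (s m, t 0) (s (Suc m), t L))"
    if "m < M" "L \<le> K" for m L
    using that(2)
  proof (induction L)
    case 0
    then show ?case using has_integral_null[of "(s m, t 0)" "(s (Suc m), t 0)" F]
      by (simp add: content_Pair)
  next
    case (Suc L)
    then show ?case
      using has_integral_combine_y[OF mono_chain_le[OF t, of 0 L] _ Suc.IH I[OF that(1)]] t by simp
  qed
  have "(F has_integral (\<Sum>m<M'. \<Sum>l<K. I m l)) (cbox (s 0, t 0) (s M', t K))" if "M' \<le> M" for M'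
    using that
  proof (induction M')
    case 0
    then show ?case using has_integral_null[of "(s 0, t 0)" "(s 0, t K)" F] by (simp add: content_Pair)
  next
    case (Suc M')
    then show ?case
      using has_integral_combine_x[OF mono_chain_le[OF s, of 0 M'] _ Suc.IH column] s by simp
  qed
  then show ?thesis by simp
qed

lemma integral_grid_iterated:
  fixes F :: "real \<times> real \<Rightarrow> real"
  assumes s: "\<forall>m<M. s m \<le> s (Suc m)" and t: "\<forall>l<K. t l \<le> t (Suc l)"
    and cG: "\<And>m l. m < M \<Longrightarrow> l < K \<Longrightarrow> continuous_on (cbox (s m, t l) (s (Suc m), t (Suc l))) (G m l)"
    and FG: "\<And>m l x y. m < M \<Longrightarrow> l < K \<Longrightarrow> s m < x \<Longrightarrow> x < s (Suc m) \<Longrightarrow> t l < y \<Longrightarrow> y < t (Suc l)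
               \<Longrightarrow> F (x, y) = G m l (x, y)"
  shows "F integrable_on {s 0..s M} \<times> {t 0..t K}"
    and "integral ({s 0..s M} \<times> {t 0..t K}) F
         = integral {s 0..s M} (\<lambda>x. integral {t 0..t K} (\<lambda>y. F (x, y)))"
proof -
  define I where "I m l = integral (cbox (s m, t l) (s (Suc m), t (Suc l))) (G m l)" for m l
  note cell = has_integral_cell[of "s m" "s (Suc m)" "t l" "t (Suc l)" "G m l" F for m l, folded I_def]
  have cell_ok: "s m \<le> s (Suc m)" "t l \<le> t (Suc l)" if "m < M" "l < K" for m l
    using s t that by auto
  have "(F has_integral (\<Sum>m<M. \<Sum>l<K. I m l)) (cbox (s 0, t 0) (s M, t K))"
    by (rule has_integral_grid[OF s t]) (use cell(1) cell_ok cG FG in blast)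
  then have F: "(F has_integral (\<Sum>m<M. \<Sum>l<K. I m l)) ({s 0..s M} \<times> {t 0..t K})"
    by (simp add: cbox_Pair_eq)
  then show "F integrable_on {s 0..s M} \<times> {t 0..t K}" by blast
  have "((\<lambda>x. integral {t 0..t K} (\<lambda>y. F (x, y))) has_integral (\<Sum>m<M. \<Sum>l<K. I m l)) {s 0..s M}"
  proof (rule has_integral_partition[OF s])
    fix m assume m: "m < M"
    have "((\<lambda>x. \<Sum>l<K. integral {t l..t (Suc l)} (\<lambda>y. F (x, y))) has_integral (\<Sum>l<K. I m l))
        {s m..s (Suc m)}"
      by (rule has_integral_sum) (use cell(2) cell_ok cG FG m in auto)
    then show "((\<lambda>x. integral {t 0..t K} (\<lambda>y. F (x, y))) has_integral (\<Sum>l<K. I m l)) {s m..s (Suc m)}"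
    proof (rule has_integral_spike_finite[of "{s m, s (Suc m)}", rotated 2])
      fix x assume "x \<in> {s m..s (Suc m)} - {s m, s (Suc m)}"
      then have x: "s m < x" "x < s (Suc m)" by auto
      have "(\<lambda>y. F (x, y)) integrable_on {t l..t (Suc l)}" if "l < K" for l
        using cell(3)[OF cell_ok[OF m that] cG[OF m that] FG[OF m that] x] by blast
      then have "((\<lambda>y. F (x, y)) has_integral (\<Sum>l<K. integral {t l..t (Suc l)} (\<lambda>y. F (x, y)))) {t 0..t K}"
        by (intro has_integral_partition[OF t] integrable_integral)
      then show "integral {t 0..t K} (\<lambda>y. F (x, y)) = (\<Sum>l<K. integral {t l..t (Suc l)} (\<lambda>y. F (x, y)))"
        by (rule integral_unique)
    qed simp
  qed
  with F show "integral ({s 0..s M} \<times> {t 0..t K}) F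
      = integral {s 0..s M} (\<lambda>x. integral {t 0..t K} (\<lambda>y. F (x, y)))"
    by (simp add: integral_unique)
qed

lemma staggered2_integral_iterated:
  fixes H :: "nat \<Rightarrow> nat \<Rightarrow> real \<Rightarrow> nat \<Rightarrow> nat \<Rightarrow> real \<Rightarrow> real \<Rightarrow> real \<Rightarrow> real"
  assumes mx: "mesh X Nx" and my: "mesh Y Ny"
    and cont: "\<And>i d c i' d' c'. continuous_on UNIV
                 (\<lambda>p. H i d (fst p + c) i' d' (snd p + c') (fst p) (snd p))"
  defines "F \<equiv> \<lambda>(x, y). H (pidx X Nx x) (didx X Nx x) (dsh X Nx x) (pidx Y Ny y) (didx Y Ny y) (dsh Y Ny y) x y"
  shows "F integrable_on {X 0..X Nx} \<times> {Y 0..Y Ny}"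
    and "integral ({X 0..X Nx} \<times> {Y 0..Y Ny}) F
         = integral {X 0..X Nx} (\<lambda>x. integral {Y 0..Y Ny} (\<lambda>y. F (x, y)))"
  using integral_grid_iterated[OF rnode_mono[OF mx] rnode_mono[OF my],
      where G = "\<lambda>m l p. H (m div 2) (rdual Nx m) (fst p + rshift X Nx m)
                           (l div 2) (rdual Ny l) (snd p + rshift Y Ny l) (fst p) (snd p)" and F = F]
    refined_cell_indices[OF mx] refined_cell_indices[OF my] continuous_on_subset[OF cont]
  by (auto simp: F_def)

section \<open>Integration by parts in two dimensions\<close>

lemma continuous_on_eval2:
  fixes P :: "real \<Rightarrow> real \<Rightarrow> real"
  assumes "continuous_on UNIV (\<lambda>z. P (fst z) (snd z))" "continuous_on S f" "continuous_on S g"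
  shows "continuous_on S (\<lambda>x. P (f x) (g x))"
  using continuous_on_compose2[OF assms(1) continuous_on_Pair[OF assms(2,3)]] by simp

lemma V2_line: "V2 P X Nx Y Ny A x = pw_primal Y Ny (\<lambda>j. P (A (pidx X Nx x) j) x)"
  by (simp add: fun_eq_iff V2_def pw_primal_def)

lemma W2_line: "W2 P X Nx Y Ny B x = pw_dual Y Ny (\<lambda>j. P (B (didx X Nx x) j) (dsh X Nx x))"
  by (simp add: fun_eq_iff W2_def pw_dual_def)

text \<open>The four edge sums of \<open>H2\<close>: fluxes through the horizontal (\<open>_y\<close>) and vertical
  (\<open>_x\<close>) edges of the primal cells, tested against a dual function, and of the dual cells,
  tested against a primal function.\<close>

definition primal_flux_y :: "evaluator \<Rightarrow> (nat \<Rightarrow> real) \<Rightarrow> nat \<Rightarrow> (nat \<Rightarrow> real) \<Rightarrow> nat \<Rightarrow>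
    (nat \<Rightarrow> nat \<Rightarrow> coeffs) \<Rightarrow> (nat \<Rightarrow> nat \<Rightarrow> coeffs) \<Rightarrow> real" where
  "primal_flux_y P X Nx Y Ny B A = (\<Sum>i<Nx. \<Sum>j<Ny. integral {X i..X (Suc i)}
     (\<lambda>x. W2 P X Nx Y Ny B x (Y (Suc j)) * P (A i j) x (Y (Suc j))
         - W2 P X Nx Y Ny B x (Y j) * P (A i j) x (Y j)))"

definition dual_flux_y :: "evaluator \<Rightarrow> (nat \<Rightarrow> real) \<Rightarrow> nat \<Rightarrow> (nat \<Rightarrow> real) \<Rightarrow> nat \<Rightarrow>
    (nat \<Rightarrow> nat \<Rightarrow> coeffs) \<Rightarrow> (nat \<Rightarrow> nat \<Rightarrow> coeffs) \<Rightarrow> real" where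
  "dual_flux_y P X Nx Y Ny A B = (\<Sum>i<Nx. \<Sum>j<Ny. integral {dn X Nx i..dn X Nx (Suc i)}
     (\<lambda>x. V2 P X Nx Y Ny A (per X Nx x) (per Y Ny (dn Y Ny (Suc j))) * P (B i j) x (dn Y Ny (Suc j))
         - V2 P X Nx Y Ny A (per X Nx x) (per Y Ny (dn Y Ny j)) * P (B i j) x (dn Y Ny j)))"

definition primal_flux_x :: "evaluator \<Rightarrow> (nat \<Rightarrow> real) \<Rightarrow> nat \<Rightarrow> (nat \<Rightarrow> real) \<Rightarrow> nat \<Rightarrow>
    (nat \<Rightarrow> nat \<Rightarrow> coeffs) \<Rightarrow> (nat \<Rightarrow> nat \<Rightarrow> coeffs) \<Rightarrow> real" where
  "primal_flux_x P X Nx Y Ny B A = (\<Sum>i<Nx. \<Sum>j<Ny. integral {Y j..Y (Suc j)}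
     (\<lambda>y. W2 P X Nx Y Ny B (X (Suc i)) y * P (A i j) (X (Suc i)) y
         - W2 P X Nx Y Ny B (X i) y * P (A i j) (X i) y))"

definition dual_flux_x :: "evaluator \<Rightarrow> (nat \<Rightarrow> real) \<Rightarrow> nat \<Rightarrow> (nat \<Rightarrow> real) \<Rightarrow> nat \<Rightarrow>
    (nat \<Rightarrow> nat \<Rightarrow> coeffs) \<Rightarrow> (nat \<Rightarrow> nat \<Rightarrow> coeffs) \<Rightarrow> real" where
  "dual_flux_x P X Nx Y Ny A B = (\<Sum>i<Nx. \<Sum>j<Ny. integral {dn Y Ny j..dn Y Ny (Suc j)}
     (\<lambda>y. V2 P X Nx Y Ny A (per X Nx (dn X Nx (Suc i))) (per Y Ny y) * P (B i j) (dn X Nx (Suc i)) y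
         - V2 P X Nx Y Ny A (per X Nx (dn X Nx i)) (per Y Ny y) * P (B i j) (dn X Nx i) y))"

lemma line_integration_by_parts_y:
  fixes P Py :: evaluator
  assumes my: "mesh Y Ny"
    and dP: "\<And>c x y. ((\<lambda>y. P c x y) has_real_derivative Py c x y) (at y)"
    and cPy: "\<And>c. continuous_on UNIV (\<lambda>z. Py c (fst z) (snd z))"
  shows "integral {Y 0..Y Ny} (\<lambda>y. W2 P X Nx Y Ny B x y * V2 Py X Nx Y Ny A x y
                                 + V2 P X Nx Y Ny A x y * W2 Py X Nx Y Ny B x y)
       = primal_flux Y Ny (W2 P X Nx Y Ny B x) (\<lambda>j. P (A (pidx X Nx x) j) x)
       + dual_flux Y Ny (V2 P X Nx Y Ny A x) (\<lambda>j. P (B (didx X Nx x) j) (dsh X Nx x))"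
proof -
  have cP: "continuous_on UNIV (P c x)" for c x
    using dP by (blast intro: DERIV_continuous_on has_field_derivative_at_within)
  have cPy': "continuous_on UNIV (Py c x)" for c x
    by (rule continuous_on_eval2[OF cPy]) (auto intro: continuous_intros)
  show ?thesis
    unfolding V2_line W2_line
    using integral_add[OF pw_primal_dual_integrable(2)[OF my cPy' cP] pw_primal_dual_integrable(1)[OF my cP cPy']]
      pw_integration_by_parts[OF my dP dP cPy' cPy']
    by simp
qed

lemma integral_primal_flux_y:
  fixes P :: evaluator
  assumes mx: "mesh X Nx" and cP: "\<And>c. continuous_on UNIV (\<lambda>z. P c (fst z) (snd z))"
  shows "(\<lambda>x. primal_flux Y Ny (W2 P X Nx Y Ny B x) (\<lambda>j. P (A (pidx X Nx x) j) x))
           integrable_on {X 0..X Nx}"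
    and "integral {X 0..X Nx} (\<lambda>x. primal_flux Y Ny (W2 P X Nx Y Ny B x) (\<lambda>j. P (A (pidx X Nx x) j) x))
         = primal_flux_y P X Nx Y Ny B A"
proof -
  let ?f = "\<lambda>x. primal_flux Y Ny (W2 P X Nx Y Ny B x) (\<lambda>j. P (A (pidx X Nx x) j) x)"
  note cP2 = continuous_on_eval2[OF cP]
  define g where "g j x = W2 P X Nx Y Ny B x (Y (Suc j)) * P (A (pidx X Nx x) j) x (Y (Suc j))
                        - W2 P X Nx Y Ny B x (Y j) * P (A (pidx X Nx x) j) x (Y j)" for j x
  have g: "g j integrable_on {X 0..X Nx}" for j
    using staggered_integrable[OF mx, of "\<lambda>i d z x.
        P (B d (didx Y Ny (Y (Suc j)))) z (dsh Y Ny (Y (Suc j))) * P (A i j) x (Y (Suc j))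
      - P (B d (didx Y Ny (Y j))) z (dsh Y Ny (Y j)) * P (A i j) x (Y j)"]
    by (simp add: g_def[abs_def] W2_def continuous_intros cP2)
  have f: "?f = (\<lambda>x. \<Sum>j<Ny. g j x)" by (simp add: fun_eq_iff primal_flux_def g_def)
  show "?f integrable_on {X 0..X Nx}" unfolding f by (intro integrable_sum g) simp
  have "integral {X 0..X Nx} (g j) = (\<Sum>i<Nx. integral {X i..X (Suc i)}
     (\<lambda>x. W2 P X Nx Y Ny B x (Y (Suc j)) * P (A i j) x (Y (Suc j))
         - W2 P X Nx Y Ny B x (Y j) * P (A i j) x (Y j)))" for j
    by (rule integral_primal_cells[OF mx g]) (simp add: g_def pidx_primal_cell[OF mx])
  then show "integral {X 0..X Nx} ?f = primal_flux_y P X Nx Y Ny B A"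
    unfolding f primal_flux_y_def by (simp add: integral_sum g sum.swap[of _ "{..<Ny}"])
qed

lemma integral_dual_flux_y:
  fixes P :: evaluator
  assumes mx: "mesh X Nx" and cP: "\<And>c. continuous_on UNIV (\<lambda>z. P c (fst z) (snd z))"
  shows "(\<lambda>x. dual_flux Y Ny (V2 P X Nx Y Ny A x) (\<lambda>j. P (B (didx X Nx x) j) (dsh X Nx x)))
           integrable_on {X 0..X Nx}"
    and "integral {X 0..X Nx} (\<lambda>x. dual_flux Y Ny (V2 P X Nx Y Ny A x) (\<lambda>j. P (B (didx X Nx x) j) (dsh X Nx x)))
         = dual_flux_y P X Nx Y Ny A B"
proof -
  let ?f = "\<lambda>x. dual_flux Y Ny (V2 P X Nx Y Ny A x) (\<lambda>j. P (B (didx X Nx x) j) (dsh X Nx x))"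
  note cP2 = continuous_on_eval2[OF cP]
  let ?y = "\<lambda>j. per Y Ny (dn Y Ny j)"
  define g where "g j x = V2 P X Nx Y Ny A x (?y (Suc j)) * P (B (didx X Nx x) j) (dsh X Nx x) (dn Y Ny (Suc j))
                        - V2 P X Nx Y Ny A x (?y j) * P (B (didx X Nx x) j) (dsh X Nx x) (dn Y Ny j)" for j x
  have g: "g j integrable_on {X 0..X Nx}" for j
    using staggered_integrable[OF mx, of "\<lambda>i d z x.
        P (A i (pidx Y Ny (?y (Suc j)))) x (?y (Suc j)) * P (B d j) z (dn Y Ny (Suc j))
      - P (A i (pidx Y Ny (?y j))) x (?y j) * P (B d j) z (dn Y Ny j)"]
    by (simp add: g_def[abs_def] V2_def continuous_intros cP2)
  have f: "?f = (\<lambda>x. \<Sum>j<Ny. g j x)" by (simp add: fun_eq_iff dual_flux_def g_def)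
  show "?f integrable_on {X 0..X Nx}" unfolding f by (intro integrable_sum g) simp
  have "integral {X 0..X Nx} (g j) = (\<Sum>i<Nx. integral {dn X Nx i..dn X Nx (Suc i)}
     (\<lambda>x. V2 P X Nx Y Ny A (per X Nx x) (?y (Suc j)) * P (B i j) x (dn Y Ny (Suc j))
         - V2 P X Nx Y Ny A (per X Nx x) (?y j) * P (B i j) x (dn Y Ny j)))" for j
    by (rule integral_dual_cells[OF mx g])
       (simp_all add: g_def dual_cell_interior[OF mx] dual_cell_wrapped)
  then show "integral {X 0..X Nx} ?f = dual_flux_y P X Nx Y Ny A B"
    unfolding f dual_flux_y_def by (simp add: integral_sum g sum.swap[of _ "{..<Ny}"])
qed

lemma W2_V2_integrable:
  fixes P Q :: evaluator
  assumes mx: "mesh X Nx" and my: "mesh Y Ny"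
    and cP: "\<And>c. continuous_on UNIV (\<lambda>z. P c (fst z) (snd z))"
    and cQ: "\<And>c. continuous_on UNIV (\<lambda>z. Q c (fst z) (snd z))"
  shows "(\<lambda>(x, y). W2 P X Nx Y Ny B x y * V2 Q X Nx Y Ny A x y) integrable_on {X 0..X Nx} \<times> {Y 0..Y Ny}"
    and "(\<lambda>(x, y). V2 P X Nx Y Ny A x y * W2 Q X Nx Y Ny B x y) integrable_on {X 0..X Nx} \<times> {Y 0..Y Ny}"
  using staggered2_integral_iterated(1)[OF mx my, of "\<lambda>i d z i' d' z' x y. P (B d d') z z' * Q (A i i') x y"]
    staggered2_integral_iterated(1)[OF mx my, of "\<lambda>i d z i' d' z' x y. P (A i i') x y * Q (B d d') z z'"]
  by (simp_all add: V2_def W2_def continuous_intros continuous_on_eval2[OF cP] continuous_on_eval2[OF cQ])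

lemma integration_by_parts_y:
  fixes P Py :: evaluator
  assumes mx: "mesh X Nx" and my: "mesh Y Ny"
    and dP: "\<And>c x y. ((\<lambda>y. P c x y) has_real_derivative Py c x y) (at y)"
    and cP: "\<And>c. continuous_on UNIV (\<lambda>z. P c (fst z) (snd z))"
    and cPy: "\<And>c. continuous_on UNIV (\<lambda>z. Py c (fst z) (snd z))"
  shows "integral ({X 0..X Nx} \<times> {Y 0..Y Ny}) (\<lambda>(x, y). W2 P X Nx Y Ny B x y * V2 Py X Nx Y Ny A x y)
       + integral ({X 0..X Nx} \<times> {Y 0..Y Ny}) (\<lambda>(x, y). V2 P X Nx Y Ny A x y * W2 Py X Nx Y Ny B x y)
       = primal_flux_y P X Nx Y Ny B A + dual_flux_y P X Nx Y Ny A B"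
proof -
  let ?R = "{X 0..X Nx} \<times> {Y 0..Y Ny}"
  have iterated: "integral ?R (\<lambda>(x, y). W2 P X Nx Y Ny B x y * V2 Py X Nx Y Ny A x y
                                      + V2 P X Nx Y Ny A x y * W2 Py X Nx Y Ny B x y)
      = integral {X 0..X Nx} (\<lambda>x. integral {Y 0..Y Ny} (\<lambda>y. W2 P X Nx Y Ny B x y * V2 Py X Nx Y Ny A x y
                                                        + V2 P X Nx Y Ny A x y * W2 Py X Nx Y Ny B x y))"
    using staggered2_integral_iterated(2)[OF mx my, of "\<lambda>i d z i' d' z' x y.
        P (B d d') z z' * Py (A i i') x y + P (A i i') x y * Py (B d d') z z'"]
    by (simp add: V2_def W2_def continuous_intros continuous_on_eval2[OF cP] continuous_on_eval2[OF cPy])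
  have "integral ?R (\<lambda>(x, y). W2 P X Nx Y Ny B x y * V2 Py X Nx Y Ny A x y)
      + integral ?R (\<lambda>(x, y). V2 P X Nx Y Ny A x y * W2 Py X Nx Y Ny B x y)
      = integral ?R (\<lambda>(x, y). W2 P X Nx Y Ny B x y * V2 Py X Nx Y Ny A x y
                            + V2 P X Nx Y Ny A x y * W2 Py X Nx Y Ny B x y)"
    using integral_add[OF W2_V2_integrable[OF mx my cP cPy]] by (simp add: case_prod_unfold)
  also have "\<dots> = integral {X 0..X Nx} (\<lambda>x.
        primal_flux Y Ny (W2 P X Nx Y Ny B x) (\<lambda>j. P (A (pidx X Nx x) j) x)
      + dual_flux Y Ny (V2 P X Nx Y Ny A x) (\<lambda>j. P (B (didx X Nx x) j) (dsh X Nx x)))"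
    unfolding iterated line_integration_by_parts_y[OF my dP cPy] ..
  also have "\<dots> = primal_flux_y P X Nx Y Ny B A + dual_flux_y P X Nx Y Ny A B"
    using integral_add[OF integral_primal_flux_y(1)[OF mx cP] integral_dual_flux_y(1)[OF mx cP]]
    by (simp add: integral_primal_flux_y(2)[OF mx cP] integral_dual_flux_y(2)[OF mx cP])
  finally show ?thesis .
qed

lemma primal_flux_y_transpose:
  "primal_flux_y (\<lambda>c y x. P c x y) Y Ny X Nx (\<lambda>j i. B i j) (\<lambda>j i. A i j) = primal_flux_x P X Nx Y Ny B A"
  unfolding primal_flux_y_def primal_flux_x_def W2_def by (rule sum.swap)

lemma dual_flux_y_transpose:
  "dual_flux_y (\<lambda>c y x. P c x y) Y Ny X Nx (\<lambda>j i. A i j) (\<lambda>j i. B i j) = dual_flux_x P X Nx Y Ny A B"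
  unfolding dual_flux_y_def dual_flux_x_def V2_def by (rule sum.swap)

lemma integration_by_parts_x:
  fixes P Px :: evaluator
  assumes mx: "mesh X Nx" and my: "mesh Y Ny"
    and dP: "\<And>c x y. ((\<lambda>x. P c x y) has_real_derivative Px c x y) (at x)"
    and cP: "\<And>c. continuous_on UNIV (\<lambda>z. P c (fst z) (snd z))"
    and cPx: "\<And>c. continuous_on UNIV (\<lambda>z. Px c (fst z) (snd z))"
  shows "integral ({X 0..X Nx} \<times> {Y 0..Y Ny}) (\<lambda>(x, y). W2 P X Nx Y Ny B x y * V2 Px X Nx Y Ny A x y)
       + integral ({X 0..X Nx} \<times> {Y 0..Y Ny}) (\<lambda>(x, y). V2 P X Nx Y Ny A x y * W2 Px X Nx Y Ny B x y)
       = primal_flux_x P X Nx Y Ny B A + dual_flux_x P X Nx Y Ny A B"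
proof -
  let ?tP = "\<lambda>c y x. P c x y" and ?tPx = "\<lambda>c y x. Px c x y"
  let ?tA = "\<lambda>j i. A i j" and ?tB = "\<lambda>j i. B i j"
  have cPt: "continuous_on UNIV (\<lambda>z. ?tP c (fst z) (snd z))" for c
    by (rule continuous_on_eval2[OF cP]) (auto intro: continuous_intros)
  have cPxt: "continuous_on UNIV (\<lambda>z. ?tPx c (fst z) (snd z))" for c
    by (rule continuous_on_eval2[OF cPx]) (auto intro: continuous_intros)
  have "integral ({Y 0..Y Ny} \<times> {X 0..X Nx}) (\<lambda>(y, x). W2 ?tP Y Ny X Nx ?tB y x * V2 ?tPx Y Ny X Nx ?tA y x)
      = integral ({X 0..X Nx} \<times> {Y 0..Y Ny}) (\<lambda>(x, y). W2 P X Nx Y Ny B x y * V2 Px X Nx Y Ny A x y)"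
    using integral_swap_Times[OF W2_V2_integrable(1)[where P = P and Q = Px, OF mx my cP cPx]]
    by (simp add: V2_def W2_def case_prod_unfold)
  moreover have "integral ({Y 0..Y Ny} \<times> {X 0..X Nx}) (\<lambda>(y, x). V2 ?tP Y Ny X Nx ?tA y x * W2 ?tPx Y Ny X Nx ?tB y x)
      = integral ({X 0..X Nx} \<times> {Y 0..Y Ny}) (\<lambda>(x, y). V2 P X Nx Y Ny A x y * W2 Px X Nx Y Ny B x y)"
    using integral_swap_Times[OF W2_V2_integrable(2)[where P = P and Q = Px, OF mx my cP cPx]]
    by (simp add: V2_def W2_def case_prod_unfold)
  ultimately show ?thesis
    using integration_by_parts_y[where P = ?tP and Py = ?tPx and A = ?tA and B = ?tB, OF my mx dP cPt cPxt]
    by (simp add: primal_flux_y_transpose dual_flux_y_transpose)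
qed

lemma poly2_has_derivative_y: "((\<lambda>y. poly2 k c x y) has_real_derivative poly2_dy k c x y) (at y)"
  unfolding poly2_def poly2_dy_def
  by (auto intro!: derivative_eq_intros DERIV_sum simp: algebra_simps)

lemma poly2_has_derivative_x: "((\<lambda>x. poly2 k c x y) has_real_derivative poly2_dx k c x y) (at x)"
  unfolding poly2_def poly2_dx_def
  by (auto intro!: derivative_eq_intros DERIV_sum simp: algebra_simps)

lemma continuous_on_poly2: "continuous_on UNIV (\<lambda>z. poly2 k c (fst z) (snd z))"
  and continuous_on_poly2_dx: "continuous_on UNIV (\<lambda>z. poly2_dx k c (fst z) (snd z))"
  and continuous_on_poly2_dy: "continuous_on UNIV (\<lambda>z. poly2_dy k c (fst z) (snd z))"
  unfolding poly2_def poly2_dx_def poly2_dy_def by (intro continuous_intros)+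

lemma integral_scaled_diff:
  "integral S (\<lambda>x. (c::real) * f x * g x - c * f' x * g' x) = c * integral S (\<lambda>x. f x * g x - f' x * g' x)"
  by (simp add: mult.assoc right_diff_distrib[symmetric])

lemma H2_decompose:
  assumes mx: "mesh X Nx" and my: "mesh Y Ny"
  shows "H2 k \<beta>1 \<beta>2 \<tau> X Nx Y Ny (u1, u2) (\<phi>1, \<phi>2) =
     - (1 / \<tau>) * integral ({X 0..X Nx} \<times> {Y 0..Y Ny})
         (\<lambda>(x, y). (V2 (poly2 k) X Nx Y Ny u1 x y - W2 (poly2 k) X Nx Y Ny u2 x y)
                 * (V2 (poly2 k) X Nx Y Ny \<phi>1 x y - W2 (poly2 k) X Nx Y Ny \<phi>2 x y))
     + \<beta>1 * (integral ({X 0..X Nx} \<times> {Y 0..Y Ny})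
               (\<lambda>(x, y). W2 (poly2 k) X Nx Y Ny u2 x y * V2 (poly2_dx k) X Nx Y Ny \<phi>1 x y)
             - primal_flux_x (poly2 k) X Nx Y Ny u2 \<phi>1)
     + \<beta>2 * (integral ({X 0..X Nx} \<times> {Y 0..Y Ny})
               (\<lambda>(x, y). W2 (poly2 k) X Nx Y Ny u2 x y * V2 (poly2_dy k) X Nx Y Ny \<phi>1 x y)
             - primal_flux_y (poly2 k) X Nx Y Ny u2 \<phi>1)
     + \<beta>1 * (integral ({X 0..X Nx} \<times> {Y 0..Y Ny})
               (\<lambda>(x, y). V2 (poly2 k) X Nx Y Ny u1 x y * W2 (poly2_dx k) X Nx Y Ny \<phi>2 x y)
             - dual_flux_x (poly2 k) X Nx Y Ny u1 \<phi>2)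
     + \<beta>2 * (integral ({X 0..X Nx} \<times> {Y 0..Y Ny})
               (\<lambda>(x, y). V2 (poly2 k) X Nx Y Ny u1 x y * W2 (poly2_dy k) X Nx Y Ny \<phi>2 x y)
             - dual_flux_y (poly2 k) X Nx Y Ny u1 \<phi>2)"
proof -
  let ?R = "{X 0..X Nx} \<times> {Y 0..Y Ny}"
  let ?f1 = "\<lambda>(x, y). W2 (poly2 k) X Nx Y Ny u2 x y * V2 (poly2_dx k) X Nx Y Ny \<phi>1 x y"
  let ?f2 = "\<lambda>(x, y). W2 (poly2 k) X Nx Y Ny u2 x y * V2 (poly2_dy k) X Nx Y Ny \<phi>1 x y"
  let ?f3 = "\<lambda>(x, y). V2 (poly2 k) X Nx Y Ny u1 x y * W2 (poly2_dx k) X Nx Y Ny \<phi>2 x y"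
  let ?f4 = "\<lambda>(x, y). V2 (poly2 k) X Nx Y Ny u1 x y * W2 (poly2_dy k) X Nx Y Ny \<phi>2 x y"
  note integrable = W2_V2_integrable[OF mx my continuous_on_poly2]
  have "((\<lambda>p. \<beta>1 * ?f1 p + \<beta>2 * ?f2 p + \<beta>1 * ?f3 p + \<beta>2 * ?f4 p) has_integral
      \<beta>1 * integral ?R ?f1 + \<beta>2 * integral ?R ?f2 + \<beta>1 * integral ?R ?f3 + \<beta>2 * integral ?R ?f4) ?R"
    by (intro has_integral_add has_integral_mult_right integrable_integral integrable
          continuous_on_poly2_dx continuous_on_poly2_dy)
  then have volume: "integral ?R (\<lambda>(x, y).
        \<beta>1 * W2 (poly2 k) X Nx Y Ny u2 x y * V2 (poly2_dx k) X Nx Y Ny \<phi>1 x y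
      + \<beta>2 * W2 (poly2 k) X Nx Y Ny u2 x y * V2 (poly2_dy k) X Nx Y Ny \<phi>1 x y
      + \<beta>1 * V2 (poly2 k) X Nx Y Ny u1 x y * W2 (poly2_dx k) X Nx Y Ny \<phi>2 x y
      + \<beta>2 * V2 (poly2 k) X Nx Y Ny u1 x y * W2 (poly2_dy k) X Nx Y Ny \<phi>2 x y)
    = \<beta>1 * integral ?R ?f1 + \<beta>2 * integral ?R ?f2 + \<beta>1 * integral ?R ?f3 + \<beta>2 * integral ?R ?f4"
    by (simp add: integral_unique case_prod_unfold mult.assoc)
  show ?thesis
    unfolding H2_def Let_def prod.case volume integral_scaled_diff
    by (simp add: primal_flux_x_def primal_flux_y_def dual_flux_x_def dual_flux_y_def
        sum_distrib_left sum.distrib algebra_simps)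
qed

lemma H2_skew_symmetric:
  assumes mx: "mesh X Nx" and my: "mesh Y Ny"
  shows "H2 k \<beta>1 \<beta>2 \<tau> X Nx Y Ny (h1, h2) (g1, g2) + H2 k \<beta>1 \<beta>2 \<tau> X Nx Y Ny (g1, g2) (h1, h2)
       = - (2 / \<tau>) * integral ({X 0..X Nx} \<times> {Y 0..Y Ny})
           (\<lambda>(x, y). (V2 (poly2 k) X Nx Y Ny h1 x y - W2 (poly2 k) X Nx Y Ny h2 x y)
                   * (V2 (poly2 k) X Nx Y Ny g1 x y - W2 (poly2 k) X Nx Y Ny g2 x y))"
proof -
  note ibp_x = integration_by_parts_x[where P = "poly2 k" and Px = "poly2_dx k",
      OF mx my poly2_has_derivative_x continuous_on_poly2 continuous_on_poly2_dx]
  note ibp_y = integration_by_parts_y[where P = "poly2 k" and Py = "poly2_dy k",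
      OF mx my poly2_has_derivative_y continuous_on_poly2 continuous_on_poly2_dy]
  have "integral ({X 0..X Nx} \<times> {Y 0..Y Ny})
         (\<lambda>(x, y). (V2 (poly2 k) X Nx Y Ny g1 x y - W2 (poly2 k) X Nx Y Ny g2 x y)
                 * (V2 (poly2 k) X Nx Y Ny h1 x y - W2 (poly2 k) X Nx Y Ny h2 x y))
     = integral ({X 0..X Nx} \<times> {Y 0..Y Ny})
         (\<lambda>(x, y). (V2 (poly2 k) X Nx Y Ny h1 x y - W2 (poly2 k) X Nx Y Ny h2 x y)
                 * (V2 (poly2 k) X Nx Y Ny g1 x y - W2 (poly2 k) X Nx Y Ny g2 x y))"
    by (simp add: mult.commute)
  from neg_divide_add_same[OF this, of \<tau>] show ?thesis
    unfolding H2_decompose[OF mx my]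
    using scaled_pair_cancel[OF ibp_x[where B = h2 and A = g1], of \<beta>1]
      scaled_pair_cancel[OF ibp_x[where B = g2 and A = h1], of \<beta>1]
      scaled_pair_cancel[OF ibp_y[where B = h2 and A = g1], of \<beta>2]
      scaled_pair_cancel[OF ibp_y[where B = g2 and A = h1], of \<beta>2]
    by linarith
qed

lemma umesh_mesh: "a < b \<Longrightarrow> 1 \<le> N \<Longrightarrow> mesh (umesh a b N) N"
  unfolding mesh_def umesh_def by (auto simp: field_simps)

lemma umesh_endpoints: "umesh a b N 0 = a" "1 \<le> N \<Longrightarrow> umesh a b N N = b"
  by (simp_all add: umesh_def)

theorem lemma3p1:
  shows "(\<forall>(k::nat) (\<beta>::real) (\<tau>::real) (xb::nat \<Rightarrow> real) (N::nat).
            0 < \<tau> \<and> 1 \<le> N \<and> (\<forall>i<N. xb i < xb (Suc i)) \<longrightarrow>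
            (\<forall>h1 h2 g1 g2 :: nat \<Rightarrow> real poly.
               (\<forall>i<N. degree (h1 i) \<le> k \<and> degree (h2 i) \<le> k \<and>
                      degree (g1 i) \<le> k \<and> degree (g2 i) \<le> k) \<longrightarrow>
               H1 \<beta> \<tau> xb N (h1, h2) (g1, g2) + H1 \<beta> \<tau> xb N (g1, g2) (h1, h2)
               = - (2 / \<tau>) * integral {xb 0..xb N}
                   (\<lambda>x. (Vh1 xb N h1 x - Wh1 xb N h2 x) * (Vh1 xb N g1 x - Wh1 xb N g2 x))))
       \<and>
       (\<forall>(k::nat) (\<beta>1::real) (\<beta>2::real) (\<tau>::real) (xmin::real) xmax ymin ymax (Nx::nat) (Ny::nat).
            0 < \<tau> \<and> xmin < xmax \<and> ymin < ymax \<and> 1 \<le> Nx \<and> 1 \<le> Ny \<longrightarrow>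
            (let xb = umesh xmin xmax Nx; yb = umesh ymin ymax Ny in
             \<forall>h1 h2 g1 g2 :: nat \<Rightarrow> nat \<Rightarrow> coeffs.
               H2 k \<beta>1 \<beta>2 \<tau> xb Nx yb Ny (h1, h2) (g1, g2) + H2 k \<beta>1 \<beta>2 \<tau> xb Nx yb Ny (g1, g2) (h1, h2)
               = - (2 / \<tau>) * integral ({xmin..xmax} \<times> {ymin..ymax})
                   (\<lambda>(x, y). (V2 (poly2 k) xb Nx yb Ny h1 x y - W2 (poly2 k) xb Nx yb Ny h2 x y)
                           * (V2 (poly2 k) xb Nx yb Ny g1 x y - W2 (poly2 k) xb Nx yb Ny g2 x y))))"
proof -
  have "mesh xb N" if "1 \<le> N" "\<forall>i<N. xb i < xb (Suc i)" for xb N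
    using that by (simp add: mesh_def)
  then show ?thesis
    using H1_skew_symmetric H2_skew_symmetric[OF umesh_mesh umesh_mesh]
    by (auto simp: Let_def umesh_endpoints)
qed

end
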